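(* Let $\mathfrak{A}$ be a complete atomic weakly associative relation algebra and $\mathfrak{B}$ its suitable structure. If $\langle u_0,u_1,u_2\rangle\in V(\mathfrak{B})$, then $\langle u_{\pi(0)},u_{\pi(1)},u_{\pi(2)}\rangle\in V(\mathfrak{B})$ for every function $\pi:\{0,1,2\}\to\{0,1,2\}$ that is not a permutation.
   Context: WA: algebras $\langle A,+,\overline{\phantom{x}},;,\breve{\phantom{x}},1'\rangle$ with $x\cdot y=\overline{\overline{x}+\overline{y}}$, $0'=\overline{1'}$, $1=1'+0'$, $0=\overline{1}$, satisfying for all $x,y,z$: $x+y=y+x$; $x+(y+z)=(x+y)+z$; $\overline{\overline{x}+\overline{y}}+\overline{\overline{x}+y}=x$; $((x\cdot 1');1);1=(x\cdot1');1$; $(x+y);z=x;z+y;z$; $x;1'=x$; $\breve{\breve{x}}=x$; $\breve{(x+y)}=\breve{x}+\breve{y}$; $\breve{(x;y)}=\breve{y};\breve{x}$; $\breve{x};\overline{x;y}+\overline{y}=\overline{y}$. Suitable structure $\mathfrak{B}=\langle B,T_\kappa,E_{\kappa\lambda}\rangle_{\kappa,\lambda<3}$: $B=\{s\in{}^3\mathrm{At}(\mathfrak{A}): s_2;s_0\ge s_1\}$; $T_\kappa=\{\langle s,t\rangle\in B\times B:s_\kappa=t_\kappa\}$; $E_{\kappa\kappa}=B$; for distinct $\kappa,\lambda$ with third index $\mu$, $E_{\kappa\lambda}=\{s\in B:s_\mu\le1'\}$. Trails: a $\mathfrak{B}$-trail is $p=\langle t_0,\kappa_0,\dots,t_n,\kappa_n\rangle$,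 $n\in\omega$, $t_i\in B$, $\kappa_i<3$, with $t_i\ne t_{i+1}$ and $\langle t_i,t_{i+1}\rangle\in T_{\kappa_i}$ for $i<n$; it ends at $t_n$. $\mathrm{Tr}(\mathfrak{B})$ = set of trails; $p\lambda=\langle t_0,\kappa_0,\dots,t_n,\lambda\rangle$. $\approx$ is the smallest equivalence relation on $\mathrm{Tr}(\mathfrak{B})$ with (for trails of the displayed forms): (a) $\langle t_0,\kappa_0,\dots,t_i,\lambda,s,\lambda,t_i,\kappa_i,\dots,t_n,\kappa_n\rangle\approx\langle t_0,\kappa_0,\dots,t_i,\kappa_i,\dots,t_n,\kappa_n\rangle$; (b) $\langle t_0,\kappa_0,\dots,t_n,\lambda,s,\nu\rangle\approx\langle t_0,\kappa_0,\dots,t_n,\nu\rangle$ if $\lambda\ne\nu$; (c) $\langle t_0,\kappa_0,\dots,t_n,\lambda\rangle\approx\langle t_0,\kappa_0,\dots,t_n,\kappa_n\rangle$ if $t_n\in E_{\lambda\kappa_n}$. $p^{\mathfrak{B}}$ = $\approx$-class of $p$; $V(\mathfrak{B})=\{\langle(p0)^{\mathfrak{B}},(p1)^{\mathfrak{B}},(p2)^{\mathfrak{B}}\rangle:p\in\mathrm{Tr}(\mathfrak{B})\}$. *)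

theory Defs
  imports Main
begin

text \<open>A WA-type structure on the whole type 'a is given by the operations
  pl (+), cm (complement), cp (relative product ;), cv (converse), e (identity 1').\<close>

definition wa_meet :: "('a\<Rightarrow>'a\<Rightarrow>'a) \<Rightarrow> ('a\<Rightarrow>'a) \<Rightarrow> 'a \<Rightarrow> 'a \<Rightarrow> 'a" where
  "wa_meet pl cm x y = cm (pl (cm x) (cm y))"

definition wa_top :: "('a\<Rightarrow>'a\<Rightarrow>'a) \<Rightarrow> ('a\<Rightarrow>'a) \<Rightarrow> 'a \<Rightarrow> 'a" where
  "wa_top pl cm e = pl e (cm e)"

definition wa_bot :: "('a\<Rightarrow>'a\<Rightarrow>'a) \<Rightarrow> ('a\<Rightarrow>'a) \<Rightarrow> 'a \<Rightarrow> 'a" where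
  "wa_bot pl cm e = cm (wa_top pl cm e)"

definition WA :: "('a\<Rightarrow>'a\<Rightarrow>'a) \<Rightarrow> ('a\<Rightarrow>'a) \<Rightarrow> ('a\<Rightarrow>'a\<Rightarrow>'a) \<Rightarrow> ('a\<Rightarrow>'a) \<Rightarrow> 'a \<Rightarrow> bool" where
  "WA pl cm cp cv e \<longleftrightarrow>
    (\<forall>x y z.
       pl x y = pl y x
     \<and> pl x (pl y z) = pl (pl x y) z
     \<and> pl (cm (pl (cm x) (cm y))) (cm (pl (cm x) y)) = x
     \<and> cp (cp (wa_meet pl cm x e) (wa_top pl cm e)) (wa_top pl cm e)
         = cp (wa_meet pl cm x e) (wa_top pl cm e)
     \<and> cp (pl x y) z = pl (cp x z) (cp y z)
     \<and> cp x e = x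
     \<and> cv (cv x) = x
     \<and> cv (pl x y) = pl (cv x) (cv y)
     \<and> cv (cp x y) = cp (cv y) (cv x)
     \<and> pl (cp (cv x) (cm (cp x y))) (cm y) = cm y)"

definition wa_le :: "('a\<Rightarrow>'a\<Rightarrow>'a) \<Rightarrow> 'a \<Rightarrow> 'a \<Rightarrow> bool" where
  "wa_le pl x y \<longleftrightarrow> pl x y = y"

definition wa_atom :: "('a\<Rightarrow>'a\<Rightarrow>'a) \<Rightarrow> ('a\<Rightarrow>'a) \<Rightarrow> 'a \<Rightarrow> 'a \<Rightarrow> bool" where
  "wa_atom pl cm e a \<longleftrightarrow> a \<noteq> wa_bot pl cm e \<and>
     (\<forall>y. wa_le pl y a \<longrightarrow> y = wa_bot pl cm e \<or> y = a)"

definition wa_atomic :: "('a\<Rightarrow>'a\<Rightarrow>'a) \<Rightarrow> ('a\<Rightarrow>'a) \<Rightarrow> 'a \<Rightarrow> bool" where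
  "wa_atomic pl cm e \<longleftrightarrow>
     (\<forall>x. x \<noteq> wa_bot pl cm e \<longrightarrow> (\<exists>a. wa_atom pl cm e a \<and> wa_le pl a x))"

definition wa_complete :: "('a\<Rightarrow>'a\<Rightarrow>'a) \<Rightarrow> bool" where
  "wa_complete pl \<longleftrightarrow>
     (\<forall>S. \<exists>s. (\<forall>x\<in>S. wa_le pl x s) \<and> (\<forall>t. (\<forall>x\<in>S. wa_le pl x t) \<longrightarrow> wa_le pl s t))"

definition nth3 :: "'b \<times> 'b \<times> 'b \<Rightarrow> nat \<Rightarrow> 'b" where
  "nth3 s k = (case s of (a, b, c) \<Rightarrow> if k = 0 then a else if k = 1 then b else c)"

definition sB :: "('a\<Rightarrow>'a\<Rightarrow>'a) \<Rightarrow> ('a\<Rightarrow>'a) \<Rightarrow> ('a\<Rightarrow>'a\<Rightarrow>'a) \<Rightarrow> 'a \<Rightarrow> ('a \<times> 'a \<times> 'a) set" where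
  "sB pl cm cp e = {s. (\<forall>k<3. wa_atom pl cm e (nth3 s k)) \<and>
                        wa_le pl (nth3 s 1) (cp (nth3 s 2) (nth3 s 0))}"

definition sT :: "('a\<Rightarrow>'a\<Rightarrow>'a) \<Rightarrow> ('a\<Rightarrow>'a) \<Rightarrow> ('a\<Rightarrow>'a\<Rightarrow>'a) \<Rightarrow> 'a \<Rightarrow> nat
                   \<Rightarrow> (('a \<times> 'a \<times> 'a) \<times> ('a \<times> 'a \<times> 'a)) set" where
  "sT pl cm cp e k = {(s, t). s \<in> sB pl cm cp e \<and> t \<in> sB pl cm cp e \<and> nth3 s k = nth3 t k}"

definition sE :: "('a\<Rightarrow>'a\<Rightarrow>'a) \<Rightarrow> ('a\<Rightarrow>'a) \<Rightarrow> ('a\<Rightarrow>'a\<Rightarrow>'a) \<Rightarrow> 'a \<Rightarrow> nat \<Rightarrow> nat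
                   \<Rightarrow> ('a \<times> 'a \<times> 'a) set" where
  "sE pl cm cp e k l =
     (if k = l then sB pl cm cp e
      else {s \<in> sB pl cm cp e. wa_le pl (nth3 s (3 - k - l)) e})"

text \<open>Trails: a trail <t0,k0,...,tn,kn> is represented as the nonempty list [(t0,k0),...,(tn,kn)].\<close>
definition trails :: "('a\<Rightarrow>'a\<Rightarrow>'a) \<Rightarrow> ('a\<Rightarrow>'a) \<Rightarrow> ('a\<Rightarrow>'a\<Rightarrow>'a) \<Rightarrow> 'a
                       \<Rightarrow> (('a \<times> 'a \<times> 'a) \<times> nat) list set" where
  "trails pl cm cp e = {p. p \<noteq> [] \<and>
      (\<forall>i<length p. fst (p ! i) \<in> sB pl cm cp e \<and> snd (p ! i) < 3) \<and>
      (\<forall>i. Suc i < length p \<longrightarrow> fst (p ! i) \<noteq> fst (p ! Suc i) \<and>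
           (fst (p ! i), fst (p ! Suc i)) \<in> sT pl cm cp e (snd (p ! i)))}"

definition trail_upd :: "('b \<times> nat) list \<Rightarrow> nat \<Rightarrow> ('b \<times> nat) list" where
  "trail_upd p l = butlast p @ [(fst (last p), l)]"

text \<open>Generating pairs (a), (b), (c) of the relation \<approx>.\<close>
definition trail_gen :: "('a\<Rightarrow>'a\<Rightarrow>'a) \<Rightarrow> ('a\<Rightarrow>'a) \<Rightarrow> ('a\<Rightarrow>'a\<Rightarrow>'a) \<Rightarrow> 'a
     \<Rightarrow> ((('a \<times> 'a \<times> 'a) \<times> nat) list \<times> (('a \<times> 'a \<times> 'a) \<times> nat) list) set" where
  "trail_gen pl cm cp e = {(p, q). p \<in> trails pl cm cp e \<and> q \<in> trails pl cm cp e \<and>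
      ((\<exists>xs ys t s l k. p = xs @ [(t, l), (s, l), (t, k)] @ ys \<and> q = xs @ [(t, k)] @ ys)
     \<or> (\<exists>xs t s l n. l \<noteq> n \<and> p = xs @ [(t, l), (s, n)] \<and> q = xs @ [(t, n)])
     \<or> (\<exists>xs t l k. p = xs @ [(t, l)] \<and> q = xs @ [(t, k)] \<and> t \<in> sE pl cm cp e l k))}"

definition trail_equiv :: "('a\<Rightarrow>'a\<Rightarrow>'a) \<Rightarrow> ('a\<Rightarrow>'a) \<Rightarrow> ('a\<Rightarrow>'a\<Rightarrow>'a) \<Rightarrow> 'a
     \<Rightarrow> ((('a \<times> 'a \<times> 'a) \<times> nat) list \<times> (('a \<times> 'a \<times> 'a) \<times> nat) list) set" where
  "trail_equiv pl cm cp e =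
     Id_on (trails pl cm cp e) \<union> (trail_gen pl cm cp e \<union> (trail_gen pl cm cp e)\<inverse>)\<^sup>+"

definition trail_class :: "('a\<Rightarrow>'a\<Rightarrow>'a) \<Rightarrow> ('a\<Rightarrow>'a) \<Rightarrow> ('a\<Rightarrow>'a\<Rightarrow>'a) \<Rightarrow> 'a
     \<Rightarrow> (('a \<times> 'a \<times> 'a) \<times> nat) list \<Rightarrow> (('a \<times> 'a \<times> 'a) \<times> nat) list set" where
  "trail_class pl cm cp e p = trail_equiv pl cm cp e `` {p}"

definition VB :: "('a\<Rightarrow>'a\<Rightarrow>'a) \<Rightarrow> ('a\<Rightarrow>'a) \<Rightarrow> ('a\<Rightarrow>'a\<Rightarrow>'a) \<Rightarrow> 'a
     \<Rightarrow> ((('a \<times> 'a \<times> 'a) \<times> nat) list set \<times> (('a \<times> 'a \<times> 'a) \<times> nat) list set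
         \<times> (('a \<times> 'a \<times> 'a) \<times> nat) list set) set" where
  "VB pl cm cp e = {(trail_class pl cm cp e (trail_upd p 0),
                     trail_class pl cm cp e (trail_upd p 1),
                     trail_class pl cm cp e (trail_upd p 2)) | p. p \<in> trails pl cm cp e}"

end

theory Submission
  imports Defs
begin

text \<open>By rule (b), extending a trail ending in \<open>t\<close> with index \<open>l\<close> by a
  \<open>T\<^sub>l\<close>-neighbour \<open>s\<close> of \<open>t\<close> leaves the classes of its variants \<open>p\<nu>\<close>, \<open>\<nu> \<noteq> l\<close>,
  unchanged, and if \<open>s \<in> E\<^sub>l\<^sub>m\<close> rule (c) then makes the \<open>l\<close>-th class equal to the
  \<open>m\<close>-th. Such an \<open>s\<close> exists for every \<open>t \<in> B\<close>: each atom \<open>a\<close> has identity atoms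
  \<open>i \<le> 1'\<close> with \<open>a \<le> a;i\<close>, \<open>i \<le> a\<inverse>;a\<close> and, dually, \<open>a \<le> i;a\<close>, \<open>i \<le> a;a\<inverse>\<close>, by
  atomicity and the cycle law. Hence \<open>V(B)\<close> is closed under
  copying one coordinate of a triple into another, and every non-bijective self-map of
  \<open>{0,1,2}\<close> is a composite of at most three such copies.\<close>

locale huntington =
  fixes pl :: "'a \<Rightarrow> 'a \<Rightarrow> 'a" (infixl "\<oplus>" 65) and cm :: "'a \<Rightarrow> 'a"
  assumes join_comm: "x \<oplus> y = y \<oplus> x"
    and join_assoc: "x \<oplus> (y \<oplus> z) = (x \<oplus> y) \<oplus> z"
    and huntington: "cm (cm x \<oplus> cm y) \<oplus> cm (cm x \<oplus> y) = x"
begin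

abbreviation meet (infixl "\<otimes>" 70) where "x \<otimes> y \<equiv> wa_meet pl cm x y"
abbreviation le (infix "\<preceq>" 50) where "x \<preceq> y \<equiv> wa_le pl x y"

lemma join_left_commute: "x \<oplus> (y \<oplus> z) = y \<oplus> (x \<oplus> z)"
  by (metis join_assoc join_comm)

lemma compl_compl: "cm (cm x) = x"
proof -
  have "x \<oplus> cm x = cm x \<oplus> cm (cm x)" for x
    by (smt (verit) huntington join_assoc join_comm)
  then show ?thesis
    by (metis huntington join_comm)
qed

lemma join_compl_eq: "x \<oplus> cm x = y \<oplus> cm y"
proof -
  have x: "x \<oplus> cm x = (cm (cm x \<oplus> cm y) \<oplus> cm (cm x \<oplus> y)) \<oplus> (cm (x \<oplus> cm y) \<oplus> cm (x \<oplus> y))"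
    using huntington[of x y] huntington[of "cm x" y] by (simp add: compl_compl)
  have y: "y \<oplus> cm y = (cm (cm y \<oplus> cm x) \<oplus> cm (cm y \<oplus> x)) \<oplus> (cm (y \<oplus> cm x) \<oplus> cm (y \<oplus> x))"
    using huntington[of y x] huntington[of "cm y" x] by (simp add: compl_compl)
  show ?thesis
    unfolding x y by (simp add: join_comm join_left_commute join_assoc[symmetric])
qed

lemma join_compl_top: "x \<oplus> cm x = cm (wa_bot pl cm z)"
  by (simp add: wa_bot_def wa_top_def compl_compl join_compl_eq[of x z])

lemma join_bot: "x \<oplus> wa_bot pl cm z = x"
  by (smt (verit, ccfv_SIG) compl_compl huntington join_assoc join_compl_top)

lemma join_idem: "x \<oplus> x = x"
  by (metis huntington compl_compl join_compl_top join_bot)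

lemma meet_join_meet_compl: "x \<otimes> y \<oplus> x \<otimes> cm y = x"
  unfolding wa_meet_def using huntington[of x y] by (simp add: compl_compl)

lemma join_absorb: "x \<oplus> x \<otimes> y = x"
  by (metis meet_join_meet_compl join_assoc join_comm join_idem)

lemma meet_comm: "x \<otimes> y = y \<otimes> x"
  by (simp add: wa_meet_def join_comm)

lemma meet_assoc: "x \<otimes> y \<otimes> z = x \<otimes> (y \<otimes> z)"
  by (simp add: wa_meet_def compl_compl join_assoc)

lemma meet_idem: "x \<otimes> x = x"
  by (simp add: wa_meet_def join_idem compl_compl)

lemma le_iff_meet: "x \<preceq> y \<longleftrightarrow> x \<otimes> y = x"
proof
  assume "x \<preceq> y"
  then have "cm x \<otimes> cm y = cm y"
    by (simp add: wa_le_def wa_meet_def compl_compl)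
  then have "cm x \<oplus> cm y = cm x"
    using join_absorb[of "cm x" "cm y"] by (simp add: join_comm)
  then show "x \<otimes> y = x"
    by (simp add: wa_meet_def compl_compl)
next
  assume "x \<otimes> y = x"
  then show "x \<preceq> y"
    using join_absorb[of y x] by (simp add: wa_le_def meet_comm join_comm)
qed

lemma wa_le_trans: "x \<preceq> y \<Longrightarrow> y \<preceq> z \<Longrightarrow> x \<preceq> z"
  unfolding wa_le_def by (metis join_assoc)

lemma meet_le1: "x \<otimes> y \<preceq> x"
  unfolding le_iff_meet by (metis meet_assoc meet_comm meet_idem)

lemma meet_le2: "x \<otimes> y \<preceq> y"
  using meet_le1 meet_comm by metis

lemma bot_le: "wa_bot pl cm z \<preceq> x"
  unfolding wa_le_def using join_bot join_comm by metis

lemma le_bot_iff: "x \<preceq> wa_bot pl cm z \<longleftrightarrow> x = wa_bot pl cm z"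
  unfolding wa_le_def using join_bot join_comm by metis

lemma meet_eq_bot_iff: "x \<otimes> y = wa_bot pl cm z \<longleftrightarrow> y \<preceq> cm x"
proof
  assume h: "x \<otimes> y = wa_bot pl cm z"
  have "y = y \<otimes> x \<oplus> y \<otimes> cm x"
    by (rule meet_join_meet_compl[symmetric])
  also have "\<dots> = y \<otimes> cm x"
    using h by (metis meet_comm join_comm join_bot)
  finally show "y \<preceq> cm x"
    unfolding le_iff_meet by metis
next
  assume "y \<preceq> cm x"
  then have "x \<otimes> y = x \<otimes> (y \<otimes> cm x)"
    unfolding le_iff_meet by metis
  also have "\<dots> = (x \<otimes> cm x) \<otimes> y"
    by (metis meet_assoc meet_comm)
  also have "x \<otimes> cm x = wa_bot pl cm z"
    using join_compl_top[of "cm x" z] by (simp add: wa_meet_def compl_compl)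
  finally show "x \<otimes> y = wa_bot pl cm z"
    using le_bot_iff meet_le1 by metis
qed

end

locale wa =
  fixes pl :: "'a \<Rightarrow> 'a \<Rightarrow> 'a" (infixl "\<oplus>" 65) and cm :: "'a \<Rightarrow> 'a"
    and cp :: "'a \<Rightarrow> 'a \<Rightarrow> 'a" (infixl ";" 75) and cv :: "'a \<Rightarrow> 'a" and e :: 'a
  assumes WA: "WA pl cm cp cv e"
begin

lemma WA_axioms:
  "x \<oplus> y = y \<oplus> x"
  "x \<oplus> (y \<oplus> z) = (x \<oplus> y) \<oplus> z"
  "cm (cm x \<oplus> cm y) \<oplus> cm (cm x \<oplus> y) = x"
  "(x \<oplus> y) ; z = x ; z \<oplus> y ; z"
  "x ; e = x"
  "cv (cv x) = x"
  "cv (x \<oplus> y) = cv x \<oplus> cv y"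
  "cv (x ; y) = cv y ; cv x"
  "cv x ; cm (x ; y) \<oplus> cm y = cm y"
  using WA unfolding WA_def by blast+

sublocale huntington pl cm
  by unfold_locales (fact WA_axioms)+

lemmas comp_distrib_right = WA_axioms(4)
  and comp_one_right = WA_axioms(5)
  and conv_conv = WA_axioms(6)
  and conv_join = WA_axioms(7)
  and conv_comp = WA_axioms(8)
  and conv_comp_compl = WA_axioms(9)

lemma comp_distrib_left: "x ; (y \<oplus> z) = x ; y \<oplus> x ; z"
proof -
  have "cv (x ; (y \<oplus> z)) = cv (x ; y \<oplus> x ; z)"
    by (simp add: conv_comp conv_join comp_distrib_right)
  then show ?thesis
    by (metis conv_conv)
qed

lemma comp_mono_right: "y \<preceq> z \<Longrightarrow> x ; y \<preceq> x ; z"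
  unfolding wa_le_def by (simp add: comp_distrib_left[symmetric])

lemma conv_mono: "x \<preceq> y \<Longrightarrow> cv x \<preceq> cv y"
  unfolding wa_le_def by (simp add: conv_join[symmetric])

lemma conv_bot: "cv (wa_bot pl cm e) = wa_bot pl cm e"
  by (metis bot_le conv_conv conv_mono le_bot_iff)

lemma conv_one: "cv e = e"
  by (metis comp_one_right conv_comp conv_conv)

lemma cycle: "(x ; y) \<otimes> z = wa_bot pl cm e \<Longrightarrow> (cv x ; z) \<otimes> y = wa_bot pl cm e"
  unfolding meet_comm[of "cv x ; z"] meet_eq_bot_iff
  using comp_mono_right[of z "cm (x ; y)" "cv x"] conv_comp_compl[folded wa_le_def] wa_le_trans
  by blast

abbreviation atom where "atom \<equiv> wa_atom pl cm e"

lemma atom_conv: "atom a \<Longrightarrow> atom (cv a)"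
  unfolding wa_atom_def by (metis conv_bot conv_conv conv_mono)

lemma atom_disjoint_or_le: "atom a \<Longrightarrow> a \<otimes> y = wa_bot pl cm e \<or> a \<preceq> y"
  unfolding wa_atom_def using le_iff_meet meet_le1 by blast

lemma identity_atom_right:
  assumes "wa_atomic pl cm e" and "atom a"
  obtains i where "atom i" "i \<preceq> e" "a \<preceq> a ; i" "i \<preceq> cv a ; a"
proof -
  have "(cv a ; a) \<otimes> e \<noteq> wa_bot pl cm e"
  proof
    assume "(cv a ; a) \<otimes> e = wa_bot pl cm e"
    then have "(cv (cv a) ; e) \<otimes> a = wa_bot pl cm e"
      by (rule cycle)
    then have "a = wa_bot pl cm e"
      by (simp add: comp_one_right conv_conv meet_idem)
    with \<open>atom a\<close> show False
      by (simp add: wa_atom_def)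
  qed
  with assms(1) obtain i where i: "atom i" "i \<preceq> (cv a ; a) \<otimes> e"
    unfolding wa_atomic_def by blast
  have "i \<preceq> cv a ; a" "i \<preceq> e"
    using i(2) meet_le1 meet_le2 wa_le_trans by blast+
  moreover have "a \<preceq> a ; i"
  proof -
    have "(a ; i) \<otimes> a \<noteq> wa_bot pl cm e"
    proof
      assume "(a ; i) \<otimes> a = wa_bot pl cm e"
      then have "(cv a ; a) \<otimes> i = wa_bot pl cm e"
        by (rule cycle)
      with \<open>i \<preceq> cv a ; a\<close> have "i = wa_bot pl cm e"
        by (metis le_iff_meet meet_comm)
      with i(1) show False
        by (simp add: wa_atom_def)
    qed
    then show ?thesis
      using atom_disjoint_or_le[OF assms(2)] meet_comm by metis
  qed
  ultimately show thesis
    using that i(1) by blast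
qed

lemma identity_atom_left:
  assumes "wa_atomic pl cm e" and "atom a"
  obtains i where "atom i" "i \<preceq> e" "a \<preceq> i ; a" "i \<preceq> a ; cv a"
proof -
  obtain j where "atom j" "j \<preceq> e" "cv a \<preceq> cv a ; j" "j \<preceq> cv (cv a) ; cv a"
    using identity_atom_right[OF assms(1) atom_conv[OF assms(2)]] .
  then have "atom (cv j)" "cv j \<preceq> e" "a \<preceq> cv j ; a" "cv j \<preceq> a ; cv a"
    using atom_conv conv_mono[of j e] conv_mono[of "cv a" "cv a ; j"]
      conv_mono[of j "cv (cv a) ; cv a"]
    by (simp_all add: conv_one conv_comp conv_conv)
  then show thesis
    by (rule that)
qed

end

lemma mem_sB_iff:
  "(x0, x1, x2) \<in> sB pl cm cp e \<longleftrightarrow>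
     wa_atom pl cm e x0 \<and> wa_atom pl cm e x1 \<and> wa_atom pl cm e x2 \<and> wa_le pl x1 (cp x2 x0)"
  by (auto simp: sB_def nth3_def numeral_3_eq_3 less_Suc_eq)

context wa
begin

lemma obtain_sB_atom_with_identity:
  assumes "wa_atomic pl cm e" and "atom a" and "k < 3" "j < 3" "k \<noteq> j"
  obtains s where "s \<in> sB pl cm cp e" "nth3 s k = a" "nth3 s j \<preceq> e"
proof -
  obtain i where i: "atom i" "i \<preceq> e" "a \<preceq> a ; i" "i \<preceq> cv a ; a"
    using identity_atom_right[OF assms(1,2)] .
  obtain i' where i': "atom i'" "i' \<preceq> e" "a \<preceq> i' ; a" "i' \<preceq> a ; cv a"
    using identity_atom_left[OF assms(1,2)] .
  have "(a, i, cv a) \<in> sB pl cm cp e" "(cv a, i', a) \<in> sB pl cm cp e"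
    "(a, a, i') \<in> sB pl cm cp e" "(i, a, a) \<in> sB pl cm cp e"
    using assms(2) atom_conv i i' by (simp_all add: mem_sB_iff)
  moreover have "k = 0 \<and> j = 1 \<or> k = 2 \<and> j = 1 \<or> j = 2 \<and> k < 2 \<or> j = 0 \<and> 0 < k"
    using assms(3-5) by auto
  ultimately show thesis
    using that assms(2) i(2) i'(2) by (auto simp: nth3_def)
qed

lemma obtain_sE_agreeing:
  assumes "wa_atomic pl cm e" and "t \<in> sB pl cm cp e" and "l < 3" "m < 3" "l \<noteq> m"
  obtains s where "s \<in> sE pl cm cp e l m" "nth3 s l = nth3 t l"
proof -
  have "atom (nth3 t l)"
    using assms(2,3) by (simp add: sB_def)
  moreover have "3 - l - m < 3" "l \<noteq> 3 - l - m"
    using assms(3-5) by arith+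
  ultimately obtain s where "s \<in> sB pl cm cp e" "nth3 s l = nth3 t l" "nth3 s (3 - l - m) \<preceq> e"
    using obtain_sB_atom_with_identity[OF assms(1)] assms(3) by metis
  then show thesis
    using that assms(5) by (simp add: sE_def)
qed

end

lemma trails_nonempty: "p \<in> trails pl cm cp e \<Longrightarrow> p \<noteq> []"
  by (simp add: trails_def)

lemma trails_last_in_sB: "p \<in> trails pl cm cp e \<Longrightarrow> fst (last p) \<in> sB pl cm cp e"
  by (auto simp: trails_def last_conv_nth)

lemma nth_trail_upd:
  assumes "i < length p"
  shows "trail_upd p l ! i = (if Suc i = length p then (fst (p ! i), l) else p ! i)"
proof -
  have "p \<noteq> []" "Suc i = length p \<Longrightarrow> length p - 1 = i"
    using assms by auto
  then show ?thesis
    using assms by (auto simp: trail_upd_def nth_append nth_butlast last_conv_nth)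
qed

lemma length_trail_upd: "p \<noteq> [] \<Longrightarrow> length (trail_upd p l) = length p"
  by (simp add: trail_upd_def)

lemma trails_trail_upd:
  assumes "p \<in> trails pl cm cp e" and "l < 3"
  shows "trail_upd p l \<in> trails pl cm cp e"
proof -
  have "trail_upd p l \<noteq> []"
    by (simp add: trail_upd_def)
  then show ?thesis
    using assms trails_nonempty[OF assms(1)]
    by (auto simp: trails_def length_trail_upd nth_trail_upd Suc_lessD)
qed

lemma trails_snoc:
  assumes "p \<in> trails pl cm cp e" and "s \<in> sB pl cm cp e" and "k < 3"
    and "fst (last p) \<noteq> s" and "(fst (last p), s) \<in> sT pl cm cp e (snd (last p))"
  shows "p @ [(s, k)] \<in> trails pl cm cp e"
proof -
  have "p ! i = last p" if "Suc i = length p" for i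
    using that by (metis diff_Suc_1 last_conv_nth length_greater_0_conv zero_less_Suc)
  then show ?thesis
    using assms trails_nonempty[OF assms(1)] unfolding trails_def
    by (auto simp: nth_append less_Suc_eq)
qed

lemma trail_class_eq_if_trail_gen:
  assumes "(p, q) \<in> trail_gen pl cm cp e"
  shows "trail_class pl cm cp e p = trail_class pl cm cp e q"
proof -
  let ?G = "trail_gen pl cm cp e \<union> (trail_gen pl cm cp e)\<inverse>"
  have "(p, q) \<in> ?G\<^sup>+" "(q, p) \<in> ?G\<^sup>+"
    using assms by auto
  then show ?thesis
    unfolding trail_class_def trail_equiv_def by (auto intro: trancl_trans)
qed

lemma trail_class_drop_last:
  assumes "xs @ [(t, l), (s, n)] \<in> trails pl cm cp e" and "xs @ [(t, n)] \<in> trails pl cm cp e"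
    and "l \<noteq> n"
  shows "trail_class pl cm cp e (xs @ [(t, l), (s, n)]) = trail_class pl cm cp e (xs @ [(t, n)])"
  by (rule trail_class_eq_if_trail_gen) (use assms in \<open>unfold trail_gen_def, blast\<close>)

lemma trail_class_relabel_last:
  assumes "xs @ [(t, l)] \<in> trails pl cm cp e" and "xs @ [(t, k)] \<in> trails pl cm cp e"
    and "t \<in> sE pl cm cp e l k"
  shows "trail_class pl cm cp e (xs @ [(t, l)]) = trail_class pl cm cp e (xs @ [(t, k)])"
  by (rule trail_class_eq_if_trail_gen) (use assms in \<open>unfold trail_gen_def, blast\<close>)

lemma sE_subset_sB: "sE pl cm cp e l k \<subseteq> sB pl cm cp e"
  by (auto simp: sE_def)

lemma trail_copy_step:
  assumes p: "p \<in> trails pl cm cp e" and "l < 3" "m < 3" "l \<noteq> m"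
    and s: "s \<in> sE pl cm cp e l m" "nth3 s l = nth3 (fst (last p)) l"
  obtains q where "q \<in> trails pl cm cp e"
    "\<And>v. v < 3 \<Longrightarrow> trail_class pl cm cp e (trail_upd q v)
                  = trail_class pl cm cp e (trail_upd p (if v = l then m else v))"
proof -
  define t where "t = fst (last p)"
  define ys where "ys = butlast p"
  have p_upd: "trail_upd p k = ys @ [(t, k)]" for k
    by (simp add: trail_upd_def ys_def t_def)
  have p_trail: "ys @ [(t, k)] \<in> trails pl cm cp e" if "k < 3" for k
    using trails_trail_upd[OF p that] by (simp add: p_upd)
  show thesis
  proof (cases "s = t")
    case True
    show thesis
    proof (rule that[OF p])
      show "trail_class pl cm cp e (trail_upd p v)
          = trail_class pl cm cp e (trail_upd p (if v = l then m else v))" for v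
        using trail_class_relabel_last[OF p_trail p_trail] assms(2,3) s True by (simp add: p_upd)
    qed
  next
    case False
    have "s \<in> sB pl cm cp e"
      using sE_subset_sB s(1) by (rule subsetD)
    moreover have "(t, s) \<in> sT pl cm cp e l"
      using trails_last_in_sB[OF p] s(2) \<open>s \<in> sB pl cm cp e\<close> by (simp add: sT_def t_def)
    ultimately have q_trail: "ys @ [(t, l), (s, k)] \<in> trails pl cm cp e" if "k < 3" for k
      using trails_snoc[OF p_trail[OF assms(2)] _ that] False by simp
    have q_upd: "trail_upd (ys @ [(t, l), (s, l)]) k = ys @ [(t, l), (s, k)]" for k
      using butlast_snoc[of "ys @ [(t, l)]" "(s, l)"] by (simp add: trail_upd_def)
    show thesis
    proof (rule that[OF q_trail[OF assms(2)]])
      fix v :: nat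
      assume "v < 3"
      show "trail_class pl cm cp e (trail_upd (ys @ [(t, l), (s, l)]) v)
          = trail_class pl cm cp e (trail_upd p (if v = l then m else v))"
      proof (cases "v = l")
        case True
        have "trail_class pl cm cp e (ys @ [(t, l), (s, l)]) = trail_class pl cm cp e (ys @ [(t, l), (s, m)])"
          using trail_class_relabel_last[of "ys @ [(t, l)]" s l _ _ _ _ m] q_trail assms(2,3) s by simp
        also have "\<dots> = trail_class pl cm cp e (ys @ [(t, m)])"
          by (rule trail_class_drop_last[OF q_trail[OF assms(3)] p_trail[OF assms(3)] assms(4)])
        finally show ?thesis
          using True by (simp add: q_upd p_upd)
      next
        case False
        then have "l \<noteq> v"
          by simp
        then show ?thesis
          using trail_class_drop_last[OF q_trail[OF \<open>v < 3\<close>] p_trail[OF \<open>v < 3\<close>]]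
          by (simp add: q_upd p_upd)
      qed
    qed
  qed
qed

definition reindex3 :: "nat \<times> nat \<times> nat \<Rightarrow> 'b \<times> 'b \<times> 'b \<Rightarrow> 'b \<times> 'b \<times> 'b" where
  "reindex3 \<sigma> u = (nth3 u (nth3 \<sigma> 0), nth3 u (nth3 \<sigma> 1), nth3 u (nth3 \<sigma> 2))"

definition copy3 :: "nat \<Rightarrow> nat \<Rightarrow> nat \<times> nat \<times> nat" where
  "copy3 l m = (if l = 0 then m else 0, if l = 1 then m else 1, if l = 2 then m else 2)"

lemma nth3_reindex3: "nth3 (reindex3 \<sigma> u) k = nth3 u (nth3 \<sigma> k)"
  by (cases u; cases \<sigma>) (simp add: reindex3_def nth3_def)

lemma reindex3_reindex3: "reindex3 \<tau> (reindex3 \<sigma> u) = reindex3 (reindex3 \<tau> \<sigma>) u"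
  by (simp only: reindex3_def[of \<tau> "reindex3 \<sigma> u"] reindex3_def[of "reindex3 \<tau> \<sigma>" u] nth3_reindex3)

lemma reindex3_id: "reindex3 (0, 1, 2) = id"
  by (auto simp: fun_eq_iff reindex3_def nth3_def)

lemma reindex3_image_subset_if_not_distinct:
  assumes copy: "\<And>l m. l < 3 \<Longrightarrow> m < 3 \<Longrightarrow> l \<noteq> m \<Longrightarrow> reindex3 (copy3 l m) ` V \<subseteq> V"
    and "x < 3" "y < 3" "z < 3" "\<not> distinct [x, y, z]"
  shows "reindex3 (x, y, z) ` V \<subseteq> V"
proof -
  define closed where "closed \<sigma> \<longleftrightarrow> reindex3 \<sigma> ` V \<subseteq> V" for \<sigma>
  have closed_id: "closed (0, 1, 2)"
    unfolding closed_def reindex3_id by simp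
  have closed_copy: "closed (reindex3 (copy3 l m) \<sigma>)"
    if "closed \<sigma>" "l < 3" "m < 3" "l \<noteq> m" for \<sigma> l m
    using that copy[of l m] unfolding closed_def
    by (auto simp: reindex3_reindex3[symmetric])
  have "closed (a, b, c) \<Longrightarrow> closed (b, b, c)" "closed (a, b, c) \<Longrightarrow> closed (c, b, c)"
    "closed (a, b, c) \<Longrightarrow> closed (a, a, c)" "closed (a, b, c) \<Longrightarrow> closed (a, c, c)"
    "closed (a, b, c) \<Longrightarrow> closed (a, b, a)" "closed (a, b, c) \<Longrightarrow> closed (a, b, b)" for a b c
    using closed_copy[of "(a, b, c)" 0 1] closed_copy[of "(a, b, c)" 0 2]
      closed_copy[of "(a, b, c)" 1 0] closed_copy[of "(a, b, c)" 1 2]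
      closed_copy[of "(a, b, c)" 2 0] closed_copy[of "(a, b, c)" 2 1]
    by (simp_all add: copy3_def reindex3_def nth3_def)
  note copy_rules = this
  have "x \<in> {0, 1, 2}" "y \<in> {0, 1, 2}" "z \<in> {0, 1, 2}"
    using assms(2-4) by auto
  then have "closed (x, y, z)"
    using assms(5) closed_id by (auto; blast intro: copy_rules)
  then show ?thesis
    by (simp add: closed_def)
qed

lemma (in wa) VB_copy_closed:
  assumes "wa_atomic pl cm e" and "l < 3" "m < 3" "l \<noteq> m"
  shows "reindex3 (copy3 l m) ` VB pl cm cp e \<subseteq> VB pl cm cp e"
proof
  fix w
  assume "w \<in> reindex3 (copy3 l m) ` VB pl cm cp e"
  then obtain p where p: "p \<in> trails pl cm cp e" and w: "w = reindex3 (copy3 l m)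
      (trail_class pl cm cp e (trail_upd p 0), trail_class pl cm cp e (trail_upd p 1),
       trail_class pl cm cp e (trail_upd p 2))"
    unfolding VB_def by blast
  obtain s where "s \<in> sE pl cm cp e l m" "nth3 s l = nth3 (fst (last p)) l"
    using obtain_sE_agreeing[OF assms(1) trails_last_in_sB[OF p] assms(2-4)] by metis
  then obtain q where q: "q \<in> trails pl cm cp e" and copied: "\<And>v. v < 3 \<Longrightarrow>
      trail_class pl cm cp e (trail_upd q v) = trail_class pl cm cp e (trail_upd p (if v = l then m else v))"
    using trail_copy_step[OF p assms(2-4)] by metis
  have "w = (trail_class pl cm cp e (trail_upd q 0), trail_class pl cm cp e (trail_upd q 1),
      trail_class pl cm cp e (trail_upd q 2))"
  proof -
    have "l = 0 \<or> l = 1 \<or> l = 2" "m = 0 \<or> m = 1 \<or> m = 2"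
      using assms(2,3) by auto
    then show ?thesis
      using copied[of 0] copied[of 1] copied[of 2]
      by (elim disjE) (simp_all add: w reindex3_def copy3_def nth3_def)
  qed
  with q show "w \<in> VB pl cm cp e"
    unfolding VB_def by blast
qed

theorem lemma8:
  fixes pl :: "'a \<Rightarrow> 'a \<Rightarrow> 'a" and cm :: "'a \<Rightarrow> 'a" and cp :: "'a \<Rightarrow> 'a \<Rightarrow> 'a"
    and cv :: "'a \<Rightarrow> 'a" and e :: 'a
    and u :: "(('a \<times> 'a \<times> 'a) \<times> nat) list set \<times> (('a \<times> 'a \<times> 'a) \<times> nat) list set
              \<times> (('a \<times> 'a \<times> 'a) \<times> nat) list set"
    and \<pi> :: "nat \<Rightarrow> nat"
  assumes "WA pl cm cp cv e"
    and "wa_complete pl"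
    and "wa_atomic pl cm e"
    and "u \<in> VB pl cm cp e"
    and "\<pi> ` {0,1,2} \<subseteq> {0,1,2}"
    and "\<not> bij_betw \<pi> {0,1,2} {0,1,2}"
  shows "(nth3 u (\<pi> 0), nth3 u (\<pi> 1), nth3 u (\<pi> 2)) \<in> VB pl cm cp e"
proof -
  interpret wa pl cm cp cv e
    by unfold_locales (fact assms(1))
  have range: "\<pi> 0 < 3" "\<pi> 1 < 3" "\<pi> 2 < 3"
    using assms(5) by auto
  have not_distinct: "\<not> distinct [\<pi> 0, \<pi> 1, \<pi> 2]"
  proof
    assume "distinct [\<pi> 0, \<pi> 1, \<pi> 2]"
    then have "inj_on \<pi> {0,1,2}"
      by (auto simp: inj_on_def)
    moreover from this have "\<pi> ` {0,1,2} = {0,1,2}"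
      using endo_inj_surj[OF _ assms(5)] by simp
    ultimately have "bij_betw \<pi> {0,1,2} {0,1,2}"
      by (simp add: bij_betw_def)
    with assms(6) show False ..
  qed
  have "reindex3 (\<pi> 0, \<pi> 1, \<pi> 2) ` VB pl cm cp e \<subseteq> VB pl cm cp e"
  proof (rule reindex3_image_subset_if_not_distinct)
    show "reindex3 (copy3 l m) ` VB pl cm cp e \<subseteq> VB pl cm cp e"
      if "l < 3" "m < 3" "l \<noteq> m" for l m
      using assms(3) that by (rule VB_copy_closed)
  qed (fact range not_distinct)+
  with assms(4) have "reindex3 (\<pi> 0, \<pi> 1, \<pi> 2) u \<in> VB pl cm cp e"
    by blast
  then show ?thesis
    by (simp add: reindex3_def nth3_def)
qed

end
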